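(* There exist $K_3$-WORM-colorable $K_4$-free graphs $G$ such that $W^-(G,K_3)=3$.
   Context: A $K_3$-WORM coloring of a graph $G$ is an assignment of colors to the vertices of $G$ such that the three vertices of every triangle of $G$ receive exactly two distinct colors. $G$ is $K_3$-WORM-colorable if it has such a coloring, and then $W^-(G,K_3)$ is the minimum number of colors used in a $K_3$-WORM coloring of $G$. A graph is $K_4$-free if it contains no subgraph isomorphic to $K_4$. *)

theory Defs
  imports Main
begin

definition simple_graph :: "'a set \<Rightarrow> ('a \<Rightarrow> 'a \<Rightarrow> bool) \<Rightarrow> bool" where
  "simple_graph V E \<longleftrightarrow> finite V \<and>
     (\<forall>x y. E x y \<longrightarrow> x \<in> V \<and> y \<in> V \<and> x \<noteq> y \<and> E y x)"

definition triangle :: "'a set \<Rightarrow> ('a \<Rightarrow> 'a \<Rightarrow> bool) \<Rightarrow> 'a \<Rightarrow> 'a \<Rightarrow> 'a \<Rightarrow> bool" where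
  "triangle V E a b c \<longleftrightarrow> a \<in> V \<and> b \<in> V \<and> c \<in> V \<and> E a b \<and> E b c \<and> E a c"

definition K4_free :: "'a set \<Rightarrow> ('a \<Rightarrow> 'a \<Rightarrow> bool) \<Rightarrow> bool" where
  "K4_free V E \<longleftrightarrow> \<not> (\<exists>a\<in>V. \<exists>b\<in>V. \<exists>c\<in>V. \<exists>d\<in>V.
      E a b \<and> E a c \<and> E a d \<and> E b c \<and> E b d \<and> E c d)"

definition K3_worm_coloring :: "'a set \<Rightarrow> ('a \<Rightarrow> 'a \<Rightarrow> bool) \<Rightarrow> ('a \<Rightarrow> nat) \<Rightarrow> bool" where
  "K3_worm_coloring V E col \<longleftrightarrow>
     (\<forall>a b c. triangle V E a b c \<longrightarrow> card {col a, col b, col c} = 2)"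

definition K3_worm_colorable :: "'a set \<Rightarrow> ('a \<Rightarrow> 'a \<Rightarrow> bool) \<Rightarrow> bool" where
  "K3_worm_colorable V E \<longleftrightarrow> (\<exists>col. K3_worm_coloring V E col)"

definition W_minus_K3 :: "'a set \<Rightarrow> ('a \<Rightarrow> 'a \<Rightarrow> bool) \<Rightarrow> nat" where
  "W_minus_K3 V E = (LEAST k. \<exists>col. K3_worm_coloring V E col \<and> card (col ` V) = k)"

end

theory Submission
  imports Defs
begin

text \<open>A WORM colouring with only two colours is the same as a vertex 2-colouring without a
  monochromatic triangle. Hence a graph in which every vertex 2-colouring has a monochromatic
  triangle needs at least three colours in any WORM colouring. A 17-vertex K4-free graph with
  this property which nevertheless has a WORM 3-colouring is checked by computation.\<close>

lemma K3_worm_coloring_triangle_not_monochromatic: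
  assumes "K3_worm_coloring V E col" and "triangle V E a b c"
  shows "\<not> (col a = col b \<and> col b = col c)"
proof -
  have "card {col a, col b, col c} = 2"
    using assms by (simp add: K3_worm_coloring_def)
  then show ?thesis by auto
qed

lemma subset_doubleton_if_card_le_2:
  assumes "finite A" and "card A \<le> 2"
  obtains p q where "A \<subseteq> {p, q}"
proof -
  consider "card A = 0" | "card A = 1" | "card A = 2"
    using assms(2) by linarith
  then show thesis
  proof cases
    case 1
    with assms(1) show thesis by (intro that) simp
  next
    case 2
    then obtain p where "A = {p}" by (auto simp: card_1_singleton_iff)
    then show thesis by (intro that) auto
  next
    case 3
    then obtain p q where "A = {p, q}" by (auto simp: card_2_iff)
    then show thesis by (intro that) auto
  qed
qed

definition vertex_arrows_triangle :: "'a set \<Rightarrow> ('a \<Rightarrow> 'a \<Rightarrow> bool) \<Rightarrow> bool" where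
  "vertex_arrows_triangle V E \<longleftrightarrow>
     (\<forall>f :: 'a \<Rightarrow> bool. \<exists>a b c. triangle V E a b c \<and> f a = f b \<and> f b = f c)"

lemma K3_worm_coloring_card_ge_3:
  assumes "finite V" and "vertex_arrows_triangle V E" and "K3_worm_coloring V E col"
  shows "3 \<le> card (col ` V)"
proof (rule ccontr)
  assume "\<not> 3 \<le> card (col ` V)"
  with assms(1) have "finite (col ` V)" and "card (col ` V) \<le> 2" by auto
  then obtain p q where pq: "col ` V \<subseteq> {p, q}"
    by (rule subset_doubleton_if_card_le_2)
  obtain a b c where abc: "triangle V E a b c"
    and mono: "(col a = p) = (col b = p)" "(col b = p) = (col c = p)"
    using assms(2) unfolding vertex_arrows_triangle_def by (elim allE[of _ "\<lambda>x. col x = p"]) blast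
  have "col a \<in> {p, q}" "col b \<in> {p, q}" "col c \<in> {p, q}"
    using abc pq unfolding triangle_def by blast+
  with mono have "col a = col b \<and> col b = col c"
    by (metis insert_iff singletonD)
  with K3_worm_coloring_triangle_not_monochromatic[OF assms(3) abc] show False ..
qed

lemma W_minus_K3_eq_3:
  assumes "finite V" and "vertex_arrows_triangle V E"
    and "K3_worm_coloring V E col" and "card (col ` V) = 3"
  shows "W_minus_K3 V E = 3"
  unfolding W_minus_K3_def
proof (rule Least_equality)
  show "\<exists>col. K3_worm_coloring V E col \<and> card (col ` V) = 3"
    using assms(3,4) by blast
next
  fix k assume "\<exists>col. K3_worm_coloring V E col \<and> card (col ` V) = k"
  then show "3 \<le> k"
    using K3_worm_coloring_card_ge_3[OF assms(1,2)] by blast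
qed

definition g17_nbrs :: "nat \<Rightarrow> nat list" where
  "g17_nbrs v = [[1,8,9,13,15,16], [0,2,3,5,10,14,16], [1,3,4,6,10,11,15], [1,2,4,5,7,11,12,16],
    [2,3,5,6,8,13], [1,3,4,6,7,9,13,14], [2,4,5,7,8,10,14], [3,5,6,8,9,11], [0,4,6,7,9,10,12,16],
    [0,5,7,8,11,13], [1,2,6,8,11,12,14], [2,3,7,9,10,12,15], [3,8,10,11,13,14,16],
    [0,4,5,9,12,14,15], [1,5,6,10,12,13,15,16], [0,2,11,13,14,16], [0,1,3,8,12,14,15]] ! v"

definition g17_adj :: "nat \<Rightarrow> nat \<Rightarrow> bool" where
  "g17_adj u v \<longleftrightarrow> u < 17 \<and> v \<in> set (g17_nbrs u)"

definition g17_coloring :: "nat \<Rightarrow> nat" where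
  "g17_coloring v = [0,1,1,0,0,1,1,0,1,1,0,1,1,0,0,2,0] ! v"

lemma g17_nbrs_symmetric:
  "\<forall>u\<in>{0..<17}. \<forall>v\<in>set (g17_nbrs u). v < 17 \<and> v \<noteq> u \<and> u \<in> set (g17_nbrs v)"
  unfolding g17_nbrs_def by code_simp

lemma g17_adj_symmetric:
  assumes "g17_adj u v"
  shows "u < 17 \<and> v < 17 \<and> u \<noteq> v \<and> g17_adj v u"
proof -
  from assms have "u \<in> {0..<17}" and "v \<in> set (g17_nbrs u)"
    by (simp_all add: g17_adj_def)
  with g17_nbrs_symmetric have "v < 17 \<and> v \<noteq> u \<and> u \<in> set (g17_nbrs v)"
    by blast
  with \<open>u \<in> {0..<17}\<close> show ?thesis
    by (simp add: g17_adj_def)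
qed

lemma simple_graph_g17: "simple_graph {0..<17} g17_adj"
  using g17_adj_symmetric by (simp add: simple_graph_def)

lemma g17_common_nbrs_independent:
  "\<forall>a\<in>{0..<17}. \<forall>b\<in>set (g17_nbrs a). \<forall>c\<in>set (g17_nbrs a). \<forall>d\<in>set (g17_nbrs a).
     c \<in> set (g17_nbrs b) \<longrightarrow> d \<in> set (g17_nbrs b) \<longrightarrow> d \<notin> set (g17_nbrs c)"
  unfolding g17_nbrs_def by code_simp

lemma K4_free_g17: "K4_free {0..<17} g17_adj"
  unfolding K4_free_def
proof clarify
  fix a b c d
  assume "g17_adj a b" "g17_adj a c" "g17_adj a d" "g17_adj b c" "g17_adj b d" "g17_adj c d"
  then have "a \<in> {0..<17}" "b \<in> set (g17_nbrs a)" "c \<in> set (g17_nbrs a)"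
    "d \<in> set (g17_nbrs a)" "c \<in> set (g17_nbrs b)" "d \<in> set (g17_nbrs b)"
    "d \<in> set (g17_nbrs c)"
    by (simp_all add: g17_adj_def)
  with g17_common_nbrs_independent show False
    by blast
qed

lemma g17_triangles_two_colored:
  "\<forall>a\<in>{0..<17}. \<forall>b\<in>set (g17_nbrs a). \<forall>c\<in>set (g17_nbrs a).
     c \<in> set (g17_nbrs b) \<longrightarrow> card {g17_coloring a, g17_coloring b, g17_coloring c} = 2"
  unfolding g17_nbrs_def g17_coloring_def by code_simp

lemma K3_worm_coloring_g17: "K3_worm_coloring {0..<17} g17_adj g17_coloring"
  using g17_triangles_two_colored
  by (auto simp: K3_worm_coloring_def triangle_def g17_adj_def)

lemma card_g17_coloring: "card (g17_coloring ` {0..<17}) = 3"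
  unfolding g17_coloring_def by code_simp

text \<open>Simplification turns the goal into a propositional formula in the 17 values of \<open>f\<close>,
  one disjunct per triangle, which SAT proves valid.\<close>
lemma g17_monochromatic_triangle:
  fixes f :: "nat \<Rightarrow> bool"
  shows "\<exists>a\<in>{0..<17}. \<exists>b\<in>set (g17_nbrs a). \<exists>c\<in>set (g17_nbrs a).
           c \<in> set (g17_nbrs b) \<and> f a = f b \<and> f b = f c"
  by (simp add: g17_nbrs_def atLeastLessThan_upt upt_rec) sat

lemma vertex_arrows_triangle_g17: "vertex_arrows_triangle {0..<17} g17_adj"
  unfolding vertex_arrows_triangle_def
proof
  fix f :: "nat \<Rightarrow> bool"
  obtain a b c where "a \<in> {0..<17}" "b \<in> set (g17_nbrs a)" "c \<in> set (g17_nbrs a)"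
      "c \<in> set (g17_nbrs b)" and mono: "f a = f b" "f b = f c"
    using g17_monochromatic_triangle[of f] by blast
  then have ab: "g17_adj a b" and ac: "g17_adj a c"
    by (simp_all add: g17_adj_def)
  moreover have "g17_adj b c"
    using g17_adj_symmetric[OF ab] \<open>c \<in> set (g17_nbrs b)\<close> by (simp add: g17_adj_def)
  ultimately have "triangle {0..<17} g17_adj a b c"
    using g17_adj_symmetric[OF ab] g17_adj_symmetric[OF ac] by (simp add: triangle_def)
  with mono show "\<exists>a b c. triangle {0..<17} g17_adj a b c \<and> f a = f b \<and> f b = f c"
    by blast
qed

theorem mainTheorem5:
  shows "\<exists>(V :: nat set) E. simple_graph V E \<and> K4_free V E \<and>
           K3_worm_colorable V E \<and> W_minus_K3 V E = 3"
proof (intro exI conjI)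
  show "simple_graph {0..<17} g17_adj" by (rule simple_graph_g17)
  show "K4_free {0..<17} g17_adj" by (rule K4_free_g17)
  show "K3_worm_colorable {0..<17} g17_adj"
    using K3_worm_coloring_g17 by (auto simp: K3_worm_colorable_def)
  show "W_minus_K3 {0..<17} g17_adj = 3"
    using vertex_arrows_triangle_g17 K3_worm_coloring_g17 card_g17_coloring
    by (rule W_minus_K3_eq_3[OF finite_atLeastLessThan])
qed

end
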